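(* A $*$-category is a pre-Hilbert $*$-category if and only if (H1) there is a zero object, (H2) every pair of objects has an orthonormal biproduct, (H3) every parallel pair of morphisms has an isometric equaliser, and (H4) every isometry is a normal monomorphism.
   Context: A $*$-category is a category with a choice of $f^*\colon Y\to X$ for each $f\colon X\to Y$ such that $1^*=1$, $(gf)^*=f^*g^*$, $(f^* )^*=f$; $f$ is an isometry if $f^*f=1$. An isometric equaliser is an equaliser that is an isometry; a kernel of $f$ is an equaliser of $f$ and the zero morphism; a normal monomorphism is a kernel of some morphism. An orthonormal biproduct is a biproduct $(X,s_1,r_1,s_2,r_2)$ with $r_k=s_k^*$. A pre-Hilbert $*$-category is a $*$-category in which (R1) there is a zero object, (R2) every pair of objects has an orthonormal biproduct, (R3) every morphism has an isometric kernel, and (R4) every diagonal $\Delta\colon X\to X\oplus X$ is a normal monomorphism. *)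

theory Defs
  imports Main
begin

text \<open>A category is given by a set of objects, a set of arrows, domain and codomain
maps, composition (cmp g f means g after f), identities, and (for a star-category)
a choice of adjoint for every arrow.\<close>

record ('o, 'm) scat =
  Ob  :: "'o set"
  Ar  :: "'m set"
  dom :: "'m \<Rightarrow> 'o"
  cod :: "'m \<Rightarrow> 'o"
  cmp :: "'m \<Rightarrow> 'm \<Rightarrow> 'm"
  idn :: "'o \<Rightarrow> 'm"
  adj :: "'m \<Rightarrow> 'm"

definition hom :: "('o, 'm) scat \<Rightarrow> 'o \<Rightarrow> 'o \<Rightarrow> 'm set" where
  "hom C X Y = {f \<in> Ar C. dom C f = X \<and> cod C f = Y}"

definition category :: "('o, 'm) scat \<Rightarrow> bool" where
  "category C \<longleftrightarrow>
     (\<forall>f \<in> Ar C. dom C f \<in> Ob C \<and> cod C f \<in> Ob C) \<and>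
     (\<forall>X \<in> Ob C. idn C X \<in> hom C X X) \<and>
     (\<forall>X \<in> Ob C. \<forall>Y \<in> Ob C. \<forall>Z \<in> Ob C. \<forall>f \<in> hom C X Y. \<forall>g \<in> hom C Y Z.
        cmp C g f \<in> hom C X Z) \<and>
     (\<forall>W \<in> Ob C. \<forall>X \<in> Ob C. \<forall>Y \<in> Ob C. \<forall>Z \<in> Ob C.
        \<forall>f \<in> hom C W X. \<forall>g \<in> hom C X Y. \<forall>h \<in> hom C Y Z.
        cmp C h (cmp C g f) = cmp C (cmp C h g) f) \<and>
     (\<forall>X \<in> Ob C. \<forall>Y \<in> Ob C. \<forall>f \<in> hom C X Y.
        cmp C (idn C Y) f = f \<and> cmp C f (idn C X) = f)"

definition star_category :: "('o, 'm) scat \<Rightarrow> bool" where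
  "star_category C \<longleftrightarrow> category C \<and>
     (\<forall>X \<in> Ob C. \<forall>Y \<in> Ob C. \<forall>f \<in> hom C X Y. adj C f \<in> hom C Y X) \<and>
     (\<forall>X \<in> Ob C. adj C (idn C X) = idn C X) \<and>
     (\<forall>X \<in> Ob C. \<forall>Y \<in> Ob C. \<forall>Z \<in> Ob C. \<forall>f \<in> hom C X Y. \<forall>g \<in> hom C Y Z.
        adj C (cmp C g f) = cmp C (adj C f) (adj C g)) \<and>
     (\<forall>f \<in> Ar C. adj C (adj C f) = f)"

definition isometry :: "('o, 'm) scat \<Rightarrow> 'm \<Rightarrow> bool" where
  "isometry C f \<longleftrightarrow> f \<in> Ar C \<and> cmp C (adj C f) f = idn C (dom C f)"

definition zero_object :: "('o, 'm) scat \<Rightarrow> 'o \<Rightarrow> bool" where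
  "zero_object C Z \<longleftrightarrow> Z \<in> Ob C \<and>
     (\<forall>X \<in> Ob C. (\<exists>!f. f \<in> hom C X Z) \<and> (\<exists>!f. f \<in> hom C Z X))"

definition zero_mor :: "('o, 'm) scat \<Rightarrow> 'o \<Rightarrow> 'o \<Rightarrow> 'm \<Rightarrow> bool" where
  "zero_mor C X Y z \<longleftrightarrow> z \<in> hom C X Y \<and>
     (\<exists>Z a b. zero_object C Z \<and> a \<in> hom C X Z \<and> b \<in> hom C Z Y \<and> z = cmp C b a)"

definition equaliser :: "('o, 'm) scat \<Rightarrow> 'm \<Rightarrow> 'm \<Rightarrow> 'm \<Rightarrow> bool" where
  "equaliser C e f g \<longleftrightarrow>
     f \<in> Ar C \<and> g \<in> Ar C \<and> dom C f = dom C g \<and> cod C f = cod C g \<and>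
     e \<in> hom C (dom C e) (dom C f) \<and> dom C e \<in> Ob C \<and>
     cmp C f e = cmp C g e \<and>
     (\<forall>W \<in> Ob C. \<forall>h \<in> hom C W (dom C f). cmp C f h = cmp C g h \<longrightarrow>
        (\<exists>!u. u \<in> hom C W (dom C e) \<and> cmp C e u = h))"

definition kernel :: "('o, 'm) scat \<Rightarrow> 'm \<Rightarrow> 'm \<Rightarrow> bool" where
  "kernel C e f \<longleftrightarrow> (\<exists>z. zero_mor C (dom C f) (cod C f) z \<and> equaliser C e f z)"

definition normal_mono :: "('o, 'm) scat \<Rightarrow> 'm \<Rightarrow> bool" where
  "normal_mono C m \<longleftrightarrow> (\<exists>f. kernel C m f)"

definition biproduct :: "('o, 'm) scat \<Rightarrow> 'o \<Rightarrow> 'o \<Rightarrow> 'o \<Rightarrow> 'm \<Rightarrow> 'm \<Rightarrow> 'm \<Rightarrow> 'm \<Rightarrow> bool" where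
  "biproduct C A B P s1 r1 s2 r2 \<longleftrightarrow>
     A \<in> Ob C \<and> B \<in> Ob C \<and> P \<in> Ob C \<and>
     s1 \<in> hom C A P \<and> r1 \<in> hom C P A \<and> s2 \<in> hom C B P \<and> r2 \<in> hom C P B \<and>
     cmp C r1 s1 = idn C A \<and> cmp C r2 s2 = idn C B \<and>
     zero_mor C A B (cmp C r2 s1) \<and> zero_mor C B A (cmp C r1 s2) \<and>
     (\<forall>W \<in> Ob C. \<forall>f1 \<in> hom C W A. \<forall>f2 \<in> hom C W B.
        \<exists>!u. u \<in> hom C W P \<and> cmp C r1 u = f1 \<and> cmp C r2 u = f2) \<and>
     (\<forall>W \<in> Ob C. \<forall>g1 \<in> hom C A W. \<forall>g2 \<in> hom C B W.
        \<exists>!v. v \<in> hom C P W \<and> cmp C v s1 = g1 \<and> cmp C v s2 = g2)"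

definition orthonormal_biproduct ::
  "('o, 'm) scat \<Rightarrow> 'o \<Rightarrow> 'o \<Rightarrow> 'o \<Rightarrow> 'm \<Rightarrow> 'm \<Rightarrow> 'm \<Rightarrow> 'm \<Rightarrow> bool" where
  "orthonormal_biproduct C A B P s1 r1 s2 r2 \<longleftrightarrow>
     biproduct C A B P s1 r1 s2 r2 \<and> r1 = adj C s1 \<and> r2 = adj C s2"

definition has_zero_object :: "('o, 'm) scat \<Rightarrow> bool" where
  "has_zero_object C \<longleftrightarrow> (\<exists>Z. zero_object C Z)"

definition has_orthonormal_biproducts :: "('o, 'm) scat \<Rightarrow> bool" where
  "has_orthonormal_biproducts C \<longleftrightarrow>
     (\<forall>A \<in> Ob C. \<forall>B \<in> Ob C. \<exists>P s1 r1 s2 r2. orthonormal_biproduct C A B P s1 r1 s2 r2)"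

definition has_isometric_kernels :: "('o, 'm) scat \<Rightarrow> bool" where
  "has_isometric_kernels C \<longleftrightarrow> (\<forall>f \<in> Ar C. \<exists>e. kernel C e f \<and> isometry C e)"

definition diagonals_normal :: "('o, 'm) scat \<Rightarrow> bool" where
  "diagonals_normal C \<longleftrightarrow>
     (\<forall>X P s1 r1 s2 r2 d. orthonormal_biproduct C X X P s1 r1 s2 r2 \<longrightarrow>
        d \<in> hom C X P \<longrightarrow> cmp C r1 d = idn C X \<longrightarrow> cmp C r2 d = idn C X \<longrightarrow>
        normal_mono C d)"

definition pre_hilbert :: "('o, 'm) scat \<Rightarrow> bool" where
  "pre_hilbert C \<longleftrightarrow> star_category C \<and> has_zero_object C \<and>
     has_orthonormal_biproducts C \<and> has_isometric_kernels C \<and> diagonals_normal C"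

definition has_isometric_equalisers :: "('o, 'm) scat \<Rightarrow> bool" where
  "has_isometric_equalisers C \<longleftrightarrow>
     (\<forall>X \<in> Ob C. \<forall>Y \<in> Ob C. \<forall>f \<in> hom C X Y. \<forall>g \<in> hom C X Y.
        \<exists>e. equaliser C e f g \<and> isometry C e)"

definition isometries_normal :: "('o, 'm) scat \<Rightarrow> bool" where
  "isometries_normal C \<longleftrightarrow> (\<forall>f. isometry C f \<longrightarrow> normal_mono C f)"

end

theory Submission
  imports Defs
begin

text \<open>The diagonal of \<open>Y \<oplus> Y\<close> is the equaliser of the two projections, so an equaliser
of \<open>f, g : X \<rightarrow> Y\<close> is the pullback of the diagonal along \<open>\<langle>f, g\<rangle> : X \<rightarrow> Y \<oplus> Y\<close>. If the
diagonal is the kernel of \<open>q\<close>, this pullback is the kernel of \<open>q \<langle>f, g\<rangle>\<close>; hence (R2)--(R4)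
give isometric equalisers that are moreover kernels. An isometry \<open>m\<close> is the equaliser of
\<open>1\<close> and \<open>m m\<^sup>*\<close>, and being a kernel passes between equalisers of the same pair, which
yields (H4). Conversely, a kernel is an equaliser with a zero morphism, giving (R3), and the
diagonal is an equaliser of the projections, so (H3) and (H4) make it normal.\<close>

lemma homI: "f \<in> Ar C \<Longrightarrow> f \<in> hom C (dom C f) (cod C f)"
  unfolding hom_def by simp

lemma in_homD:
  assumes "f \<in> hom C X Y"
  shows "f \<in> Ar C" "dom C f = X" "cod C f = Y"
  using assms unfolding hom_def by simp_all

lemma equaliserD:
  assumes "equaliser C e a b"
  shows "e \<in> hom C (dom C e) (dom C a)" "a \<in> hom C (dom C a) (cod C a)"
    "b \<in> hom C (dom C a) (cod C a)" "cmp C a e = cmp C b e"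
  using assms unfolding equaliser_def hom_def by simp_all

lemma kernelD:
  assumes "kernel C e f"
  shows "e \<in> hom C (dom C e) (dom C f)" "f \<in> hom C (dom C f) (cod C f)"
  using assms equaliserD(1,2) unfolding kernel_def by metis+

lemma biproduct_projections:
  assumes "biproduct C A B P s1 r1 s2 r2"
  shows "r1 \<in> hom C P A" "r2 \<in> hom C P B"
  using assms unfolding biproduct_def by simp_all

locale cat =
  fixes C :: "('o, 'm) scat"
  assumes category: "category C"
begin

lemma hom_Ob:
  assumes "f \<in> hom C X Y"
  shows "X \<in> Ob C" "Y \<in> Ob C"
  using assms category unfolding category_def hom_def by auto

lemma id_in_hom: "X \<in> Ob C \<Longrightarrow> idn C X \<in> hom C X X"
  using category unfolding category_def by blast

lemma comp_in_hom: "f \<in> hom C X Y \<Longrightarrow> g \<in> hom C Y Z \<Longrightarrow> cmp C g f \<in> hom C X Z"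
  using category hom_Ob unfolding category_def by meson

lemma comp_assoc:
  "f \<in> hom C W X \<Longrightarrow> g \<in> hom C X Y \<Longrightarrow> h \<in> hom C Y Z \<Longrightarrow>
   cmp C h (cmp C g f) = cmp C (cmp C h g) f"
  using category hom_Ob unfolding category_def by meson

lemma comp_id_left: "f \<in> hom C X Y \<Longrightarrow> cmp C (idn C Y) f = f"
  using category hom_Ob unfolding category_def by meson

lemma comp_id_right: "f \<in> hom C X Y \<Longrightarrow> cmp C f (idn C X) = f"
  using category hom_Ob unfolding category_def by meson

lemma zero_mor_unique:
  assumes "zero_mor C X Y z" "zero_mor C X Y z'"
  shows "z = z'"
proof -
  obtain Z a b where Z: "zero_object C Z" and a: "a \<in> hom C X Z" and b: "b \<in> hom C Z Y"
    and z: "z = cmp C b a"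
    using assms(1) unfolding zero_mor_def by blast
  obtain Z' a' b' where Z': "zero_object C Z'" and a': "a' \<in> hom C X Z'" and b': "b' \<in> hom C Z' Y"
    and z': "z' = cmp C b' a'"
    using assms(2) unfolding zero_mor_def by blast
  obtain i where i: "i \<in> hom C Z Z'"
    using Z' hom_Ob(2)[OF a] unfolding zero_object_def by blast
  have "cmp C i a = a'"
    using Z' hom_Ob(1)[OF a] comp_in_hom[OF a i] a' unfolding zero_object_def by blast
  moreover have "cmp C b' i = b"
    using Z hom_Ob(2)[OF b] comp_in_hom[OF i b'] b unfolding zero_object_def by blast
  ultimately show ?thesis
    using z z' comp_assoc[OF a i b'] by simp
qed

lemma zero_mor_comp:
  assumes "zero_mor C X Y z" "h \<in> hom C W X"
  shows "zero_mor C W Y (cmp C z h)"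
proof -
  obtain Z a b where Z: "zero_object C Z" and a: "a \<in> hom C X Z" and b: "b \<in> hom C Z Y"
    and z: "z = cmp C b a"
    using assms(1) unfolding zero_mor_def by blast
  have "cmp C z h = cmp C b (cmp C a h)"
    using z comp_assoc[OF assms(2) a b] by simp
  moreover have "cmp C z h \<in> hom C W Y"
    using comp_in_hom[OF assms(2)] assms(1) unfolding zero_mor_def by blast
  ultimately show ?thesis
    unfolding zero_mor_def using Z comp_in_hom[OF assms(2) a] b by (intro conjI exI)
qed

lemma zero_mor_exists:
  assumes "has_zero_object C" "X \<in> Ob C" "Y \<in> Ob C"
  shows "\<exists>z. zero_mor C X Y z"
proof -
  obtain Z where Z: "zero_object C Z"
    using assms(1) unfolding has_zero_object_def by blast
  have "\<exists>a. a \<in> hom C X Z" "\<exists>b. b \<in> hom C Z Y"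
    using Z assms(2,3) unfolding zero_object_def by (meson ex1_implies_ex)+
  then obtain a b where a: "a \<in> hom C X Z" and b: "b \<in> hom C Z Y"
    by blast
  then have "zero_mor C X Y (cmp C b a)"
    unfolding zero_mor_def using Z a b comp_in_hom[OF a b] by blast
  then show ?thesis ..
qed

lemma equaliser_universal:
  assumes "equaliser C e a b" "h \<in> hom C W (dom C a)" "cmp C a h = cmp C b h"
  shows "\<exists>!u. u \<in> hom C W (dom C e) \<and> cmp C e u = h"
proof -
  have "\<forall>W \<in> Ob C. \<forall>h \<in> hom C W (dom C a). cmp C a h = cmp C b h \<longrightarrow>
      (\<exists>!u. u \<in> hom C W (dom C e) \<and> cmp C e u = h)"
    using assms(1) unfolding equaliser_def by (elim conjE)
  then show ?thesis
    using assms(2,3) hom_Ob(1)[OF assms(2)] by blast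
qed

lemma equaliser_factors_iff:
  assumes e: "equaliser C e a b" and h: "h \<in> hom C W (dom C a)"
  shows "cmp C a h = cmp C b h \<longleftrightarrow> (\<exists>u \<in> hom C W (dom C e). cmp C e u = h)"
proof
  assume "cmp C a h = cmp C b h"
  then show "\<exists>u \<in> hom C W (dom C e). cmp C e u = h"
    using equaliser_universal[OF e h] by blast
next
  assume "\<exists>u \<in> hom C W (dom C e). cmp C e u = h"
  then obtain u where u: "u \<in> hom C W (dom C e)" and h: "h = cmp C e u" by blast
  show "cmp C a h = cmp C b h"
    unfolding h using comp_assoc[OF u] equaliserD[OF e] by metis
qed

lemma equaliser_mono:
  assumes e: "equaliser C e a b"
    and u: "u \<in> hom C W (dom C e)" and v: "v \<in> hom C W (dom C e)"
    and uv: "cmp C e u = cmp C e v"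
  shows "u = v"
proof -
  have eu: "cmp C e u \<in> hom C W (dom C a)"
    using comp_in_hom[OF u equaliserD(1)[OF e]] .
  moreover have "cmp C a (cmp C e u) = cmp C b (cmp C e u)"
    using equaliser_factors_iff[OF e eu] u by blast
  ultimately obtain w where "\<forall>y. y \<in> hom C W (dom C e) \<and> cmp C e y = cmp C e u \<longrightarrow> y = w"
    using equaliser_universal[OF e] by (metis ex1E)
  then show ?thesis
    using u v uv by metis
qed

lemma equaliserI_factors:
  assumes a: "a \<in> hom C X Y" and b: "b \<in> hom C X Y" and e: "e \<in> hom C E X"
    and mono: "\<And>W u v. u \<in> hom C W E \<Longrightarrow> v \<in> hom C W E \<Longrightarrow> cmp C e u = cmp C e v \<Longrightarrow> u = v"
    and factors: "\<And>W h. h \<in> hom C W X \<Longrightarrow>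
      cmp C a h = cmp C b h \<longleftrightarrow> (\<exists>u \<in> hom C W E. cmp C e u = h)"
  shows "equaliser C e a b"
proof -
  have E: "E \<in> Ob C" and dom_e: "dom C e = E"
    using hom_Ob(1)[OF e] in_homD(2)[OF e] by simp_all
  have "cmp C a e = cmp C b e"
    using factors[OF e] id_in_hom[OF E] comp_id_right[OF e] by blast
  moreover have "\<exists>!u. u \<in> hom C W E \<and> cmp C e u = h"
    if h: "h \<in> hom C W X" and hh: "cmp C a h = cmp C b h" for W h
  proof -
    obtain u where u: "u \<in> hom C W E" and eu: "cmp C e u = h"
      using factors[OF h] hh by blast
    show ?thesis
    proof (rule ex1I)
      show "u \<in> hom C W E \<and> cmp C e u = h"
        using u eu by simp
      show "v = u" if "v \<in> hom C W E \<and> cmp C e v = h" for v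
        using mono[of v W u] that u eu by simp
    qed
  qed
  ultimately show ?thesis
    unfolding equaliser_def using in_homD[OF a] in_homD[OF b] e E dom_e by simp
qed

lemma equaliserI_retraction:
  assumes m: "m \<in> hom C A X" and r: "r \<in> hom C X A" and rm: "cmp C r m = idn C A"
    and a: "a \<in> hom C X Y" and b: "b \<in> hom C X Y" and am: "cmp C a m = cmp C b m"
    and split: "\<And>W h. h \<in> hom C W X \<Longrightarrow> cmp C a h = cmp C b h \<Longrightarrow> cmp C m (cmp C r h) = h"
  shows "equaliser C m a b"
proof (rule equaliserI_factors[OF a b m])
  show "u = v" if u: "u \<in> hom C W A" and v: "v \<in> hom C W A" and uv: "cmp C m u = cmp C m v"
    for W u v
  proof -
    have "u = cmp C r (cmp C m u)"
      using comp_assoc[OF u m r] rm comp_id_left[OF u] by simp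
    also have "\<dots> = cmp C r (cmp C m v)"
      using uv by simp
    also have "\<dots> = v"
      using comp_assoc[OF v m r] rm comp_id_left[OF v] by simp
    finally show ?thesis .
  qed
  show "cmp C a h = cmp C b h \<longleftrightarrow> (\<exists>u \<in> hom C W A. cmp C m u = h)" if h: "h \<in> hom C W X"
    for W h
  proof
    assume "cmp C a h = cmp C b h"
    then show "\<exists>u \<in> hom C W A. cmp C m u = h"
      using split[OF h] comp_in_hom[OF h r] by blast
  next
    assume "\<exists>u \<in> hom C W A. cmp C m u = h"
    then obtain u where u: "u \<in> hom C W A" and h: "h = cmp C m u"
      by blast
    show "cmp C a h = cmp C b h"
      unfolding h using comp_assoc[OF u m a] comp_assoc[OF u m b] am by simp
  qed
qed

lemma split_mono_equaliser:
  assumes m: "m \<in> hom C A B" and r: "r \<in> hom C B A" and rm: "cmp C r m = idn C A"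
  shows "equaliser C m (idn C B) (cmp C m r)"
proof (rule equaliserI_retraction[OF m r rm])
  show "idn C B \<in> hom C B B"
    using id_in_hom hom_Ob(2)[OF m] by blast
  show "cmp C m r \<in> hom C B B"
    using comp_in_hom[OF r m] .
  show "cmp C (idn C B) m = cmp C (cmp C m r) m"
    using comp_id_left[OF m] comp_assoc[OF m r m] rm comp_id_right[OF m] by simp
  show "cmp C m (cmp C r h) = h"
    if h: "h \<in> hom C W B" and "cmp C (idn C B) h = cmp C (cmp C m r) h" for W h
    using that comp_assoc[OF h r m] comp_id_left[OF h] by simp
qed

lemma biproduct_universal:
  assumes bp: "biproduct C A B P s1 r1 s2 r2"
    and f1: "f1 \<in> hom C W A" and f2: "f2 \<in> hom C W B"
  shows "\<exists>!u. u \<in> hom C W P \<and> cmp C r1 u = f1 \<and> cmp C r2 u = f2"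
proof -
  have "\<forall>W \<in> Ob C. \<forall>f1 \<in> hom C W A. \<forall>f2 \<in> hom C W B.
      \<exists>!u. u \<in> hom C W P \<and> cmp C r1 u = f1 \<and> cmp C r2 u = f2"
    using bp unfolding biproduct_def by (elim conjE)
  then show ?thesis
    using hom_Ob(1)[OF f1] f1 f2 by blast
qed

lemma biproduct_tuple_exists:
  assumes "biproduct C A B P s1 r1 s2 r2" "f1 \<in> hom C W A" "f2 \<in> hom C W B"
  shows "\<exists>u \<in> hom C W P. cmp C r1 u = f1 \<and> cmp C r2 u = f2"
  using biproduct_universal[OF assms] by (elim ex1E) blast

lemma biproduct_tuple_unique:
  assumes bp: "biproduct C A B P s1 r1 s2 r2"
    and u: "u \<in> hom C W P" and v: "v \<in> hom C W P"
    and "cmp C r1 u = cmp C r1 v" "cmp C r2 u = cmp C r2 v"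
  shows "u = v"
proof -
  obtain w where "\<forall>y. y \<in> hom C W P \<and> cmp C r1 y = cmp C r1 u \<and> cmp C r2 y = cmp C r2 u
      \<longrightarrow> y = w"
    using biproduct_universal[OF bp comp_in_hom[OF u] comp_in_hom[OF u]]
      biproduct_projections[OF bp] by (metis ex1E)
  then show ?thesis
    using u v assms(4,5) by metis
qed

lemma diagonal_equaliser:
  assumes bp: "biproduct C X X P s1 r1 s2 r2" and d: "d \<in> hom C X P"
    and d1: "cmp C r1 d = idn C X" and d2: "cmp C r2 d = idn C X"
  shows "equaliser C d r1 r2"
proof -
  have r1: "r1 \<in> hom C P X" and r2: "r2 \<in> hom C P X"
    using biproduct_projections[OF bp] by auto
  show ?thesis
  proof (rule equaliserI_retraction[OF d r1 d1 r1 r2])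
    show "cmp C r1 d = cmp C r2 d"
      using d1 d2 by simp
    show "cmp C d (cmp C r1 h) = h"
      if h: "h \<in> hom C W P" and hh: "cmp C r1 h = cmp C r2 h" for W h
    proof (rule biproduct_tuple_unique[OF bp _ h])
      have r1h: "cmp C r1 h \<in> hom C W X"
        using comp_in_hom[OF h r1] .
      show "cmp C d (cmp C r1 h) \<in> hom C W P"
        using comp_in_hom[OF r1h d] .
      show "cmp C r1 (cmp C d (cmp C r1 h)) = cmp C r1 h"
        using comp_assoc[OF r1h d r1] d1 comp_id_left[OF r1h] by simp
      show "cmp C r2 (cmp C d (cmp C r1 h)) = cmp C r2 h"
        using comp_assoc[OF r1h d r2] d2 comp_id_left[OF r1h] hh by simp
    qed
  qed
qed

lemma kernel_factors_iff:
  assumes k: "kernel C e f" and h: "h \<in> hom C W (dom C f)"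
  shows "(\<exists>u \<in> hom C W (dom C e). cmp C e u = h) \<longleftrightarrow> zero_mor C W (cod C f) (cmp C f h)"
proof -
  obtain z where z: "zero_mor C (dom C f) (cod C f) z" and e: "equaliser C e f z"
    using k unfolding kernel_def by blast
  have zh: "zero_mor C W (cod C f) (cmp C z h)"
    using zero_mor_comp[OF z h] .
  have "(\<exists>u \<in> hom C W (dom C e). cmp C e u = h) \<longleftrightarrow> cmp C f h = cmp C z h"
    using equaliser_factors_iff[OF e h] by simp
  also have "\<dots> \<longleftrightarrow> zero_mor C W (cod C f) (cmp C f h)"
    using zh zero_mor_unique by metis
  finally show ?thesis .
qed

lemma normal_mono_transfer:
  assumes e: "equaliser C e a b" and e': "equaliser C e' a b" and "normal_mono C e"
  shows "normal_mono C e'"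
proof -
  obtain k z where z: "zero_mor C (dom C k) (cod C k) z" and ek: "equaliser C e k z"
    using assms(3) unfolding normal_mono_def kernel_def by blast
  have dom_k: "dom C k = dom C a"
    using in_homD(3)[OF equaliserD(1)[OF e]] in_homD(3)[OF equaliserD(1)[OF ek]] by simp
  have "equaliser C e' k z"
  proof (rule equaliserI_factors)
    show "k \<in> hom C (dom C a) (cod C k)" "z \<in> hom C (dom C a) (cod C k)"
      using equaliserD[OF ek] dom_k by simp_all
    show "e' \<in> hom C (dom C e') (dom C a)"
      using equaliserD(1)[OF e'] .
    show "u = v" if "u \<in> hom C W (dom C e')" "v \<in> hom C W (dom C e')" "cmp C e' u = cmp C e' v"
      for W u v
      using equaliser_mono[OF e' that] .
    show "cmp C k h = cmp C z h \<longleftrightarrow> (\<exists>u \<in> hom C W (dom C e'). cmp C e' u = h)"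
      if h: "h \<in> hom C W (dom C a)" for W h
      using equaliser_factors_iff[OF ek] equaliser_factors_iff[OF e h]
        equaliser_factors_iff[OF e' h] h dom_k by simp
  qed
  then show ?thesis
    unfolding normal_mono_def kernel_def using z by blast
qed

lemma normal_isometric_equaliser_exists:
  assumes biproducts: "has_orthonormal_biproducts C" and kernels: "has_isometric_kernels C"
    and diagonals: "diagonals_normal C"
    and f: "f \<in> hom C X Y" and g: "g \<in> hom C X Y"
  shows "\<exists>e. equaliser C e f g \<and> isometry C e \<and> normal_mono C e"
proof -
  obtain P s1 r1 s2 r2 where ob: "orthonormal_biproduct C Y Y P s1 r1 s2 r2"
    using biproducts hom_Ob(2)[OF f] unfolding has_orthonormal_biproducts_def by blast
  then have bp: "biproduct C Y Y P s1 r1 s2 r2"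
    unfolding orthonormal_biproduct_def by (rule conjunct1)
  have r1: "r1 \<in> hom C P Y" and r2: "r2 \<in> hom C P Y"
    using biproduct_projections[OF bp] by simp_all
  obtain d where d: "d \<in> hom C Y P" and d1: "cmp C r1 d = idn C Y" and d2: "cmp C r2 d = idn C Y"
    using biproduct_tuple_exists[OF bp] id_in_hom hom_Ob(2)[OF f] by blast
  obtain p where p: "p \<in> hom C X P" and p1: "cmp C r1 p = f" and p2: "cmp C r2 p = g"
    using biproduct_tuple_exists[OF bp f g] by blast
  obtain q where q: "kernel C d q"
    using diagonals ob d d1 d2 unfolding diagonals_normal_def normal_mono_def by blast
  have q_hom: "q \<in> hom C P (cod C q)"
    using kernelD(2)[OF q] in_homD(3)[OF kernelD(1)[OF q]] in_homD(3)[OF d] by simp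
  have qp: "cmp C q p \<in> hom C X (cod C q)"
    using comp_in_hom[OF p q_hom] .
  obtain e where e: "kernel C e (cmp C q p)" and iso: "isometry C e"
    using kernels in_homD(1)[OF qp] unfolding has_isometric_kernels_def by blast
  have e_hom: "e \<in> hom C (dom C e) X"
    using kernelD(1)[OF e] in_homD(2)[OF qp] by simp
  have "equaliser C e f g"
  proof (rule equaliserI_factors[OF f g e_hom])
    show "u = v" if "u \<in> hom C W (dom C e)" "v \<in> hom C W (dom C e)" "cmp C e u = cmp C e v"
      for W u v
      using e equaliser_mono[OF _ that] unfolding kernel_def by blast
    show "cmp C f h = cmp C g h \<longleftrightarrow> (\<exists>u \<in> hom C W (dom C e). cmp C e u = h)"
      if h: "h \<in> hom C W X" for W h
    proof -
      have ph: "cmp C p h \<in> hom C W P"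
        using comp_in_hom[OF h p] .
      have "cmp C f h = cmp C g h \<longleftrightarrow> cmp C r1 (cmp C p h) = cmp C r2 (cmp C p h)"
        using comp_assoc[OF h p r1] comp_assoc[OF h p r2] p1 p2 by simp
      also have "\<dots> \<longleftrightarrow> (\<exists>u \<in> hom C W (dom C d). cmp C d u = cmp C p h)"
        using equaliser_factors_iff[OF diagonal_equaliser[OF bp d d1 d2]] ph in_homD(2)[OF r1]
        by simp
      also have "\<dots> \<longleftrightarrow> zero_mor C W (cod C q) (cmp C q (cmp C p h))"
        using kernel_factors_iff[OF q] ph in_homD(2)[OF q_hom] by simp
      also have "\<dots> \<longleftrightarrow> (\<exists>u \<in> hom C W (dom C e). cmp C e u = h)"
        using kernel_factors_iff[OF e] h comp_assoc[OF h p q_hom] in_homD(2,3)[OF qp] by simp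
      finally show ?thesis .
    qed
  qed
  then show ?thesis
    using e iso unfolding normal_mono_def by blast
qed

lemma pre_hilbert_imp_isometric_equalisers:
  assumes "pre_hilbert C"
  shows "has_isometric_equalisers C"
  using assms normal_isometric_equaliser_exists
  unfolding pre_hilbert_def has_isometric_equalisers_def by blast

lemma pre_hilbert_imp_isometries_normal:
  assumes ph: "pre_hilbert C"
  shows "isometries_normal C"
  unfolding isometries_normal_def
proof (intro allI impI)
  fix m
  assume iso: "isometry C m"
  define A B where "A = dom C m" and "B = cod C m"
  have m: "m \<in> hom C A B" and adj_m: "cmp C (adj C m) m = idn C A"
    using iso homI unfolding isometry_def A_def B_def by auto
  have m_adj: "adj C m \<in> hom C B A"
    using ph hom_Ob[OF m] m unfolding pre_hilbert_def star_category_def by blast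
  obtain e where e: "equaliser C e (idn C B) (cmp C m (adj C m))" and "normal_mono C e"
    using ph normal_isometric_equaliser_exists id_in_hom[OF hom_Ob(2)[OF m]]
      comp_in_hom[OF m_adj m]
    unfolding pre_hilbert_def by blast
  then show "normal_mono C m"
    using normal_mono_transfer[OF e split_mono_equaliser[OF m m_adj adj_m]] by blast
qed

lemma isometric_equalisers_imp_isometric_kernels:
  assumes zero: "has_zero_object C" and equalisers: "has_isometric_equalisers C"
  shows "has_isometric_kernels C"
  unfolding has_isometric_kernels_def
proof
  fix f
  assume "f \<in> Ar C"
  then have f: "f \<in> hom C (dom C f) (cod C f)"
    by (rule homI)
  obtain z where z: "zero_mor C (dom C f) (cod C f) z"
    using zero_mor_exists[OF zero hom_Ob[OF f]] by blast
  then obtain e where "equaliser C e f z" "isometry C e"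
    using equalisers f hom_Ob[OF f] unfolding has_isometric_equalisers_def zero_mor_def by blast
  then show "\<exists>e. kernel C e f \<and> isometry C e"
    unfolding kernel_def using z by blast
qed

lemma isometries_normal_imp_diagonals_normal:
  assumes equalisers: "has_isometric_equalisers C" and isometries: "isometries_normal C"
  shows "diagonals_normal C"
  unfolding diagonals_normal_def
proof (intro allI impI)
  fix X P s1 r1 s2 r2 d
  assume "orthonormal_biproduct C X X P s1 r1 s2 r2" and d: "d \<in> hom C X P"
    and d1: "cmp C r1 d = idn C X" and d2: "cmp C r2 d = idn C X"
  then have bp: "biproduct C X X P s1 r1 s2 r2"
    unfolding orthonormal_biproduct_def by blast
  have r1: "r1 \<in> hom C P X" and r2: "r2 \<in> hom C P X"
    using biproduct_projections[OF bp] by simp_all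
  obtain e where e: "equaliser C e r1 r2" and "isometry C e"
    using equalisers hom_Ob[OF r1] r1 r2 unfolding has_isometric_equalisers_def by blast
  then have "normal_mono C e"
    using isometries unfolding isometries_normal_def by blast
  then show "normal_mono C d"
    using normal_mono_transfer[OF e diagonal_equaliser[OF bp d d1 d2]] by blast
qed

end

theorem proposition3p5:
  assumes "star_category C"
  shows "pre_hilbert C \<longleftrightarrow>
           has_zero_object C \<and> has_orthonormal_biproducts C \<and>
           has_isometric_equalisers C \<and> isometries_normal C"
proof -
  interpret cat C
    using assms unfolding star_category_def by unfold_locales blast
  show ?thesis
    using assms pre_hilbert_imp_isometric_equalisers pre_hilbert_imp_isometries_normal
      isometric_equalisers_imp_isometric_kernels isometries_normal_imp_diagonals_normal
    unfolding pre_hilbert_def by blast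
qed

end
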